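(* Let $\widehat U=(\widehat h,\widehat{q^x},\widehat{q^y})$ be a smooth solution of the stochastic Galerkin shallow water system with smooth time-independent bottom $\widehat B(x,y)$, such that $\mathcal P(\widehat h)$ is invertible everywhere. Define $E(\widehat U)=\tfrac12\big((\widehat{q^x})^\top\widehat u+(\widehat{q^y})^\top\widehat v\big)+\tfrac12 g\|\widehat h\|^2+g\,\widehat h^\top\widehat B$, $H(\widehat U)=\tfrac12\big(\widehat u^\top\mathcal P(\widehat{q^x})\widehat u+\widehat v^\top\mathcal P(\widehat{q^x})\widehat v\big)+g(\widehat{q^x})^\top(\widehat h+\widehat B)$, $K(\widehat U)=\tfrac12\big(\widehat v^\top\mathcal P(\widehat{q^y})\widehat v+\widehat u^\top\mathcal P(\widehat{q^y})\widehat u\big)+g(\widehat{q^y})^\top(\widehat h+\widehat B)$. Then $E(\widehat U)_t+H(\widehat U)_x+K(\widehat U)_y=0$.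
   Context: Let $\xi$ be a random variable in $\mathbb R^d$ with density $\rho$ having finite moments of all orders, and let $\phi_1\equiv1,\phi_2,\dots,\phi_K$ be polynomials orthonormal in $L^2_\rho$. For $k=1,\dots,K$ let $\mathcal M_k\in\mathbb R^{K\times K}$ with $(\mathcal M_k)_{l,m}=\int\phi_k\phi_l\phi_m\rho$, and for $\widehat z\in\mathbb R^K$ set $\mathcal P(\widehat z)=\sum_{k=1}^K\widehat z_k\mathcal M_k$. Let $g>0$. The stochastic Galerkin shallow water system is $\widehat U_t+\widehat F(\widehat U)_x+\widehat G(\widehat U)_y=\widehat S(\widehat U)$ for $\widehat U(x,y,t)=(\widehat h,\widehat{q^x},\widehat{q^y})\in\mathbb R^{3K}$ with $\widehat F=\big(\widehat{q^x};\ \mathcal P(\widehat{q^x})\mathcal P^{-1}(\widehat h)\widehat{q^x}+\tfrac12 g\mathcal P(\widehat h)\widehat h;\ \mathcal P(\widehat{q^x})\mathcal P^{-1}(\widehat h)\widehat{q^y}\big)$, $\widehat G=\big(\widehat{q^y};\ \mathcal P(\widehat{q^y})\mathcal P^{-1}(\widehat h)\widehat{q^x};\ \mathcal P(\widehat{q^y})\mathcal P^{-1}(\widehat h)\widehat{q^y}+\tfrac12 g\mathcal P(\widehat h)\widehat h\big)$, $\widehat S=\big(0;\ -g\mathcal P(\widehat h)\widehat B_x;\ -g\mathcal P(\widehat h)\widehat B_y\big)$ ($K$-blocks separated by semicolons), and $\widehat u=\mathcal P^{-1}(\widehat h)\widehat{q^x}$, $\widehat v=\mathcal P^{-1}(\widehat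 h)\widehat{q^y}$. *)

theory Defs
  imports "HOL-Analysis.Analysis"
begin

text \<open>Vectors in R^K are functions nat => real, only indices 1..K matter;
  K x K matrices are functions nat => nat => real, only indices in 1..K matter.\<close>

definition dotK :: "nat \<Rightarrow> (nat \<Rightarrow> real) \<Rightarrow> (nat \<Rightarrow> real) \<Rightarrow> real" where
  "dotK K a b = (\<Sum>k=1..K. a k * b k)"

definition mvK :: "nat \<Rightarrow> (nat \<Rightarrow> nat \<Rightarrow> real) \<Rightarrow> (nat \<Rightarrow> real) \<Rightarrow> (nat \<Rightarrow> real)" where
  "mvK K A v = (\<lambda>l. \<Sum>m=1..K. A l m * v m)"

definition mmK :: "nat \<Rightarrow> (nat \<Rightarrow> nat \<Rightarrow> real) \<Rightarrow> (nat \<Rightarrow> nat \<Rightarrow> real) \<Rightarrow> (nat \<Rightarrow> nat \<Rightarrow> real)" where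
  "mmK K A B = (\<lambda>i j. \<Sum>m=1..K. A i m * B m j)"

definition idK :: "nat \<Rightarrow> nat \<Rightarrow> nat \<Rightarrow> real" where
  "idK K = (\<lambda>i j. if i = j \<and> i \<in> {1..K} then 1 else 0)"

definition is_invK :: "nat \<Rightarrow> (nat \<Rightarrow> nat \<Rightarrow> real) \<Rightarrow> (nat \<Rightarrow> nat \<Rightarrow> real) \<Rightarrow> bool" where
  "is_invK K A B \<longleftrightarrow> (\<forall>i j. (i \<notin> {1..K} \<or> j \<notin> {1..K}) \<longrightarrow> B i j = 0)
     \<and> (\<forall>i\<in>{1..K}. \<forall>j\<in>{1..K}. mmK K A B i j = idK K i j \<and> mmK K B A i j = idK K i j)"

definition invertibleK :: "nat \<Rightarrow> (nat \<Rightarrow> nat \<Rightarrow> real) \<Rightarrow> bool" where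
  "invertibleK K A \<longleftrightarrow> (\<exists>B. is_invK K A B)"

definition invK :: "nat \<Rightarrow> (nat \<Rightarrow> nat \<Rightarrow> real) \<Rightarrow> (nat \<Rightarrow> nat \<Rightarrow> real)" where
  "invK K A = (THE B. is_invK K A B)"

definition poly_fun :: "(real^'d::finite \<Rightarrow> real) \<Rightarrow> bool" where
  "poly_fun f \<longleftrightarrow> (\<exists>S :: ('d \<Rightarrow> nat) set. \<exists>c. finite S \<and>
      (\<forall>x. f x = (\<Sum>\<alpha>\<in>S. c \<alpha> * (\<Prod>i\<in>UNIV. (x $ i) ^ \<alpha> i))))"

definition Mtrip :: "(nat \<Rightarrow> real^'d::finite \<Rightarrow> real) \<Rightarrow> (real^'d \<Rightarrow> real) \<Rightarrow> nat \<Rightarrow> nat \<Rightarrow> nat \<Rightarrow> real" where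
  "Mtrip \<phi> \<rho> k l m = (\<integral>\<xi>. \<phi> k \<xi> * \<phi> l \<xi> * \<phi> m \<xi> * \<rho> \<xi> \<partial>lborel)"

definition PK :: "(nat \<Rightarrow> real^'d::finite \<Rightarrow> real) \<Rightarrow> (real^'d \<Rightarrow> real) \<Rightarrow> nat \<Rightarrow> (nat \<Rightarrow> real) \<Rightarrow> (nat \<Rightarrow> nat \<Rightarrow> real)" where
  "PK \<phi> \<rho> K z = (\<lambda>l m. \<Sum>k=1..K. z k * Mtrip \<phi> \<rho> k l m)"

coinductive smooth_fun :: "('a::real_normed_vector \<Rightarrow> real) \<Rightarrow> bool" where
  "f differentiable_on UNIV \<Longrightarrow> (\<And>v. smooth_fun (\<lambda>p. frechet_derivative f (at p) v))
     \<Longrightarrow> smooth_fun f"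

end

(*
  Write T(a, b, c) = a . P(b) c = sum_{k,l,m} M_klm b_k a_l c_m.  The triple products M_klm are
  symmetric in k, l, m, so T is a symmetric trilinear form.

  Differentiating P(h) u = q^x in t gives q^x . u_t = u . q^x_t - T(u, u, h_t), and similarly for v.
  The terms u . q^x_t and v . q^y_t are eliminated with the momentum equations tested against u and
  v; what remains of E_t + H_x + K_y is the mass equation tested against (P(u) u + P(v) v)/2 and
  g (h + B), hence zero.  Symmetry of T is what matches the product-rule terms of H_x and K_y with
  those produced by the momentum equations.  Smoothness and the invertibility of P(h) only serve to
  make all fields, including u = P(h)^-1 q^x (Cramer's rule), differentiable along coordinate lines.
*)
theory Submission
  imports Defs "Jordan_Normal_Form.Determinant"
begin

section \<open>Inverses of \<open>K \<times> K\<close> matrices via the adjugate\<close>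

definition mat_ofK :: "nat \<Rightarrow> (nat \<Rightarrow> nat \<Rightarrow> real) \<Rightarrow> real mat" where
  "mat_ofK K A = mat K K (\<lambda>(i, j). A (Suc i) (Suc j))"

lemma mat_ofK_carrier [simp]: "mat_ofK K A \<in> carrier_mat K K"
  and dim_mat_ofK [simp]: "dim_row (mat_ofK K A) = K" "dim_col (mat_ofK K A) = K"
  by (simp_all add: mat_ofK_def)

lemma index_mat_ofK [simp]: "i < K \<Longrightarrow> j < K \<Longrightarrow> mat_ofK K A $$ (i, j) = A (Suc i) (Suc j)"
  by (simp add: mat_ofK_def)

lemma sum_atLeastAtMost_1_shift: "(\<Sum>m = 1..K. f m) = (\<Sum>m<K. f (Suc m))"
  by (induction K) simp_all

lemma ball_atLeastAtMost_1_iff: "(\<forall>i\<in>{1..K}. P i) \<longleftrightarrow> (\<forall>i<K. P (Suc i))"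
proof (intro iffI ballI allI impI)
  fix i assume P: "\<forall>i<K. P (Suc i)" and i: "i \<in> {1..K}"
  from i have "i = Suc (i - 1)" "i - 1 < K" by auto
  with P show "P i" by metis
qed auto

lemma index_mult_mat_ofK:
  "i < K \<Longrightarrow> j < K \<Longrightarrow> (mat_ofK K A * mat_ofK K B) $$ (i, j) = mmK K A B (Suc i) (Suc j)"
  unfolding mmK_def sum_atLeastAtMost_1_shift
  by (simp add: mat_ofK_def scalar_prod_def lessThan_atLeast0)

lemma mult_mat_ofK_eq_one_iff:
  "mat_ofK K A * mat_ofK K B = 1\<^sub>m K \<longleftrightarrow> (\<forall>i\<in>{1..K}. \<forall>j\<in>{1..K}. mmK K A B i j = idK K i j)"
proof -
  have "mat_ofK K A * mat_ofK K B = 1\<^sub>m K \<longleftrightarrow>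
      (\<forall>i<K. \<forall>j<K. mmK K A B (Suc i) (Suc j) = idK K (Suc i) (Suc j))"
    by (auto simp: mat_eq_iff index_mult_mat_ofK idK_def simp del: index_mult_mat(1))
  then show ?thesis
    unfolding ball_atLeastAtMost_1_iff .
qed

lemma is_invK_iff_mat_ofK:
  "is_invK K A B \<longleftrightarrow> (\<forall>i j. (i \<notin> {1..K} \<or> j \<notin> {1..K}) \<longrightarrow> B i j = 0)
     \<and> mat_ofK K A * mat_ofK K B = 1\<^sub>m K \<and> mat_ofK K B * mat_ofK K A = 1\<^sub>m K"
  unfolding is_invK_def mult_mat_ofK_eq_one_iff by blast

lemma mat_ofK_inject:
  assumes "mat_ofK K B = mat_ofK K C"
    and "\<And>i j. i \<notin> {1..K} \<or> j \<notin> {1..K} \<Longrightarrow> B i j = 0"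
    and "\<And>i j. i \<notin> {1..K} \<or> j \<notin> {1..K} \<Longrightarrow> C i j = 0"
  shows "B = C"
proof (intro ext)
  fix i j
  show "B i j = C i j"
  proof (cases "i \<in> {1..K} \<and> j \<in> {1..K}")
    case True
    then have "i - 1 < K" "j - 1 < K" by auto
    then have "B (Suc (i - 1)) (Suc (j - 1)) = C (Suc (i - 1)) (Suc (j - 1))"
      using assms(1) by (metis index_mat_ofK)
    with True show ?thesis by simp
  next
    case False
    then have "i \<notin> {1..K} \<or> j \<notin> {1..K}" by blast
    then show ?thesis by (simp add: assms(2,3))
  qed
qed

lemma is_invK_unique: "is_invK K A B \<Longrightarrow> is_invK K A C \<Longrightarrow> B = C"
proof -
  assume B: "is_invK K A B" and C: "is_invK K A C"
  have "mat_ofK K B = mat_ofK K B * (mat_ofK K A * mat_ofK K C)"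
    using C by (simp add: is_invK_iff_mat_ofK)
  also have "\<dots> = (mat_ofK K B * mat_ofK K A) * mat_ofK K C"
    by (simp add: assoc_mult_mat[of _ K K _ K _ K])
  also have "\<dots> = mat_ofK K C"
    using B by (simp add: is_invK_iff_mat_ofK)
  finally show "B = C"
    by (rule mat_ofK_inject) (use B C in \<open>auto simp: is_invK_def\<close>)
qed

lemma invK_eqI: "is_invK K A B \<Longrightarrow> invK K A = B"
  unfolding invK_def by (blast intro: is_invK_unique)

lemma is_invK_invK: "invertibleK K A \<Longrightarrow> is_invK K A (invK K A)"
  unfolding invertibleK_def using invK_eqI by metis

lemma mvK_mvK_invK:
  assumes "invertibleK K A" "l \<in> {1..K}"
  shows "mvK K A (mvK K (invK K A) q) l = q l"
proof -
  have "mvK K A (mvK K (invK K A) q) l = (\<Sum>n = 1..K. mmK K A (invK K A) l n * q n)"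
    unfolding mvK_def mmK_def sum_distrib_left sum_distrib_right
    by (subst sum.swap) (simp add: mult.assoc)
  also have "\<dots> = (\<Sum>n = 1..K. idK K l n * q n)"
    using is_invK_invK[OF assms(1)] assms(2) by (intro sum.cong) (auto simp: is_invK_def)
  also have "\<dots> = (\<Sum>n = 1..K. if n = l then q n else 0)"
    by (intro sum.cong) (auto simp: idK_def)
  also have "\<dots> = q l"
    using assms(2) by simp
  finally show ?thesis .
qed

lemma det_mat_ofK_nonzero: "invertibleK K A \<Longrightarrow> det (mat_ofK K A) \<noteq> 0"
proof
  assume "invertibleK K A" "det (mat_ofK K A) = 0"
  then obtain B where "mat_ofK K A * mat_ofK K B = 1\<^sub>m K"
    unfolding invertibleK_def is_invK_iff_mat_ofK by blast
  then have "det (mat_ofK K A) * det (mat_ofK K B) = 1"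
    by (metis det_mult det_one mat_ofK_carrier)
  with \<open>det (mat_ofK K A) = 0\<close> show False by simp
qed

lemma invK_eq_adj_mat_div_det:
  assumes "invertibleK K A" "i \<in> {1..K}" "j \<in> {1..K}"
  shows "invK K A i j = adj_mat (mat_ofK K A) $$ (i - 1, j - 1) / det (mat_ofK K A)"
proof -
  define d where "d = det (mat_ofK K A)"
  define C where "C i j = (if i \<in> {1..K} \<and> j \<in> {1..K}
      then adj_mat (mat_ofK K A) $$ (i - 1, j - 1) / d else 0)" for i j
  have d: "d \<noteq> 0"
    unfolding d_def using assms(1) by (rule det_mat_ofK_nonzero)
  have adj: "adj_mat (mat_ofK K A) \<in> carrier_mat K K"
    by (simp add: adj_mat(1))
  have C: "mat_ofK K C = (1 / d) \<cdot>\<^sub>m adj_mat (mat_ofK K A)"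
    using adj by (intro eq_matI) (auto simp: C_def mat_ofK_def)
  have one: "(1 / d) \<cdot>\<^sub>m (d \<cdot>\<^sub>m 1\<^sub>m K) = 1\<^sub>m K"
    using d by (intro eq_matI) auto
  have "mat_ofK K A * mat_ofK K C = 1\<^sub>m K" "mat_ofK K C * mat_ofK K A = 1\<^sub>m K"
    unfolding C using adj one
    by (simp_all add: mult_smult_distrib[of _ K K _ K] mult_smult_assoc_mat[of _ K K _ K]
        adj_mat(2,3)[OF mat_ofK_carrier] d_def)
  then have "is_invK K A C"
    unfolding is_invK_iff_mat_ofK by (auto simp: C_def)
  then show ?thesis
    using assms(2,3) by (simp add: invK_eqI C_def d_def)
qed

lemma differentiable_prod:
  fixes f :: "'i \<Rightarrow> real \<Rightarrow> real"
  shows "finite I \<Longrightarrow> (\<And>i. i \<in> I \<Longrightarrow> f i differentiable (at s)) \<Longrightarrow>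
    (\<lambda>s. \<Prod>i\<in>I. f i s) differentiable (at s)"
  by (induction I rule: finite_induct) auto

lemma differentiable_det:
  fixes A :: "real \<Rightarrow> real mat"
  assumes "\<And>s. A s \<in> carrier_mat n n"
    and "\<And>i j. i < n \<Longrightarrow> j < n \<Longrightarrow> (\<lambda>s. A s $$ (i, j)) differentiable (at s0)"
  shows "(\<lambda>s. det (A s)) differentiable (at s0)"
proof -
  have "det (A s) = (\<Sum>p | p permutes {0..<n}. signof p * (\<Prod>i = 0..<n. A s $$ (i, p i)))" for s
    using assms(1)[of s] by (simp add: det_def)
  moreover have "(\<lambda>s. \<Sum>p | p permutes {0..<n}. signof p * (\<Prod>i = 0..<n. A s $$ (i, p i)))
      differentiable (at s0)"
  proof (intro differentiable_sum ballI differentiable_mult differentiable_const)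
    show "finite {p. p permutes {0..<n}}"
      by (simp add: finite_permutations)
    fix p assume "p \<in> {p. p permutes {0..<n}}"
    then show "(\<lambda>s. \<Prod>i = 0..<n. A s $$ (i, p i)) differentiable (at s0)"
      using assms(2) by (intro differentiable_prod) (auto simp: permutes_in_image)
  qed
  ultimately show ?thesis by simp
qed

lemma differentiable_adj_mat:
  fixes A :: "real \<Rightarrow> real mat"
  assumes "\<And>s. A s \<in> carrier_mat n n"
    and "\<And>i j. i < n \<Longrightarrow> j < n \<Longrightarrow> (\<lambda>s. A s $$ (i, j)) differentiable (at s0)"
    and "i < n" "j < n"
  shows "(\<lambda>s. adj_mat (A s) $$ (i, j)) differentiable (at s0)"
proof -
  have "adj_mat (A s) $$ (i, j) = (-1) ^ (j + i) * det (mat_delete (A s) j i)" for s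
    using assms(1)[of s] assms(3,4) by (simp add: adj_mat_def cofactor_def)
  moreover have "(\<lambda>s. det (mat_delete (A s) j i)) differentiable (at s0)"
  proof (rule differentiable_det)
    show "mat_delete (A s) j i \<in> carrier_mat (n - 1) (n - 1)" for s
      using assms(1) by (rule mat_delete_carrier)
    show "(\<lambda>s. mat_delete (A s) j i $$ (a, b)) differentiable (at s0)" if "a < n - 1" "b < n - 1" for a b
    proof -
      have "(if a < j then a else Suc a) < n" "(if b < i then b else Suc b) < n"
        using that by auto
      then show ?thesis
        using that assms(2) by (simp add: mat_delete_def carrier_matD[OF assms(1)])
    qed
  qed
  ultimately show ?thesis
    by (auto intro: differentiable_mult)
qed

lemma differentiable_invK:
  fixes A :: "real \<Rightarrow> nat \<Rightarrow> nat \<Rightarrow> real"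
  assumes "\<And>s. invertibleK K (A s)"
    and "\<And>i j. i \<in> {1..K} \<Longrightarrow> j \<in> {1..K} \<Longrightarrow> (\<lambda>s. A s i j) differentiable (at s0)"
    and "i \<in> {1..K}" "j \<in> {1..K}"
  shows "(\<lambda>s. invK K (A s) i j) differentiable (at s0)"
proof -
  have entries: "(\<lambda>s. mat_ofK K (A s) $$ (a, b)) differentiable (at s0)" if "a < K" "b < K" for a b
    using that assms(2) by simp
  have "invK K (A s) i j = adj_mat (mat_ofK K (A s)) $$ (i - 1, j - 1) / det (mat_ofK K (A s))" for s
    using assms(1,3,4) by (rule invK_eq_adj_mat_div_det)
  moreover have "(\<lambda>s. adj_mat (mat_ofK K (A s)) $$ (i - 1, j - 1)) differentiable (at s0)"
    using assms(3,4)
    by (intro differentiable_adj_mat[where A = "\<lambda>s. mat_ofK K (A s)", OF mat_ofK_carrier entries])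
      auto
  moreover have "(\<lambda>s. det (mat_ofK K (A s))) differentiable (at s0)"
    by (rule differentiable_det[where A = "\<lambda>s. mat_ofK K (A s)", OF mat_ofK_carrier entries])
  ultimately show ?thesis
    using det_mat_ofK_nonzero[OF assms(1)] by (auto intro!: differentiable_divide)
qed

section \<open>The symmetric triple-product form\<close>

lemma dotK_commute: "dotK K a b = dotK K b a"
  by (simp add: dotK_def mult.commute)

lemma dotK_cong: "(\<And>k. k \<in> {1..K} \<Longrightarrow> b k = c k) \<Longrightarrow> dotK K a b = dotK K a c"
  unfolding dotK_def by (intro sum.cong) auto

lemma dotK_add_right: "dotK K a (\<lambda>k. b k + c k) = dotK K a b + dotK K a c"
  by (simp add: dotK_def sum.distrib algebra_simps)

lemma dotK_mult_right: "dotK K a (\<lambda>k. c * b k) = c * dotK K a b"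
  by (simp add: dotK_def sum_distrib_left algebra_simps)

lemma dotK_zero_right [simp]: "dotK K a (\<lambda>k. 0) = 0"
  by (simp add: dotK_def)

lemma dotK_sum3_eq_0:
  assumes "\<And>k. k \<in> {1..K} \<Longrightarrow> a k + b k + c k = 0"
  shows "dotK K a w + dotK K b w + dotK K c w = 0"
proof -
  have "dotK K a w + dotK K b w + dotK K c w = (\<Sum>k = 1..K. (a k + b k + c k) * w k)"
    by (simp add: dotK_def sum.distrib algebra_simps)
  also have "\<dots> = 0"
    using assms by simp
  finally show ?thesis .
qed

lemma PK_symmetric: "PK \<phi> \<rho> K z l m = PK \<phi> \<rho> K z m l"
  unfolding PK_def Mtrip_def by (simp add: mult_ac)

lemma mvK_PK_commute: "mvK K (PK \<phi> \<rho> K a) b = mvK K (PK \<phi> \<rho> K b) a"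
proof
  fix l
  have "mvK K (PK \<phi> \<rho> K a) b l = (\<Sum>m = 1..K. \<Sum>k = 1..K. a k * Mtrip \<phi> \<rho> k l m * b m)"
    by (simp add: mvK_def PK_def sum_distrib_right)
  also have "\<dots> = (\<Sum>k = 1..K. \<Sum>m = 1..K. b m * Mtrip \<phi> \<rho> m l k * a k)"
    by (subst sum.swap) (simp add: Mtrip_def mult_ac)
  also have "\<dots> = mvK K (PK \<phi> \<rho> K b) a l"
    by (simp add: mvK_def PK_def sum_distrib_right)
  finally show "mvK K (PK \<phi> \<rho> K a) b l = mvK K (PK \<phi> \<rho> K b) a l" .
qed

definition tripK ::
    "(nat \<Rightarrow> real^'d::finite \<Rightarrow> real) \<Rightarrow> (real^'d \<Rightarrow> real) \<Rightarrow> nat \<Rightarrow>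
      (nat \<Rightarrow> real) \<Rightarrow> (nat \<Rightarrow> real) \<Rightarrow> (nat \<Rightarrow> real) \<Rightarrow> real" where
  "tripK \<phi> \<rho> K a b c = dotK K a (mvK K (PK \<phi> \<rho> K b) c)"

lemma tripK_swap23: "tripK \<phi> \<rho> K a b c = tripK \<phi> \<rho> K a c b"
  unfolding tripK_def by (simp add: mvK_PK_commute)

lemma tripK_swap13: "tripK \<phi> \<rho> K a b c = tripK \<phi> \<rho> K c b a"
proof -
  have "dotK K a (mvK K (PK \<phi> \<rho> K b) c) = (\<Sum>l = 1..K. \<Sum>m = 1..K. a l * PK \<phi> \<rho> K b l m * c m)"
    by (simp add: dotK_def mvK_def sum_distrib_left mult.assoc)
  also have "\<dots> = (\<Sum>m = 1..K. \<Sum>l = 1..K. c m * PK \<phi> \<rho> K b m l * a l)"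
    by (subst sum.swap) (simp add: PK_symmetric mult_ac)
  also have "\<dots> = dotK K c (mvK K (PK \<phi> \<rho> K b) a)"
    by (simp add: dotK_def mvK_def sum_distrib_left mult.assoc)
  finally show ?thesis
    unfolding tripK_def .
qed

lemma tripK_conv_dotK_middle: "tripK \<phi> \<rho> K a b a = dotK K b (mvK K (PK \<phi> \<rho> K a) a)"
  by (metis tripK_def tripK_swap13 tripK_swap23)

lemma tripK_eq_dotK:
  assumes "\<And>l. l \<in> {1..K} \<Longrightarrow> mvK K (PK \<phi> \<rho> K b) a l = q l"
  shows "tripK \<phi> \<rho> K a b c = dotK K q c"
proof -
  have "tripK \<phi> \<rho> K a b c = tripK \<phi> \<rho> K c b a"
    by (rule tripK_swap13)
  also have "\<dots> = dotK K c (mvK K (PK \<phi> \<rho> K b) a)"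
    by (simp only: tripK_def)
  also have "\<dots> = dotK K c q"
    using assms by (rule dotK_cong)
  finally show ?thesis
    by (simp add: dotK_commute)
qed

lemma DERIV_dotK:
  assumes "\<And>k. k \<in> {1..K} \<Longrightarrow> ((\<lambda>s. a s k) has_real_derivative a' k) (at s0)"
    and "\<And>k. k \<in> {1..K} \<Longrightarrow> ((\<lambda>s. b s k) has_real_derivative b' k) (at s0)"
  shows "((\<lambda>s. dotK K (a s) (b s)) has_real_derivative dotK K a' (b s0) + dotK K (a s0) b') (at s0)"
proof -
  have "((\<lambda>s. \<Sum>k = 1..K. a s k * b s k) has_real_derivative
      (\<Sum>k = 1..K. a' k * b s0 k + b' k * a s0 k)) (at s0)"
    by (intro DERIV_sum DERIV_mult assms)
  then show ?thesis
    unfolding dotK_def by (rule DERIV_cong) (simp add: sum.distrib mult.commute)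
qed

lemma DERIV_PK_mvK:
  assumes "\<And>k. k \<in> {1..K} \<Longrightarrow> ((\<lambda>s. z s k) has_real_derivative z' k) (at s0)"
    and "\<And>k. k \<in> {1..K} \<Longrightarrow> ((\<lambda>s. w s k) has_real_derivative w' k) (at s0)"
  shows "((\<lambda>s. mvK K (PK \<phi> \<rho> K (z s)) (w s) l) has_real_derivative
      mvK K (PK \<phi> \<rho> K z') (w s0) l + mvK K (PK \<phi> \<rho> K (z s0)) w' l) (at s0)"
proof -
  have P: "((\<lambda>s. PK \<phi> \<rho> K (z s) l m) has_real_derivative PK \<phi> \<rho> K z' l m) (at s0)" for m
    unfolding PK_def by (intro DERIV_sum DERIV_cong[OF DERIV_mult[OF assms(1) DERIV_const]]) simp_all
  have "((\<lambda>s. \<Sum>m = 1..K. PK \<phi> \<rho> K (z s) l m * w s m) has_real_derivative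
      (\<Sum>m = 1..K. PK \<phi> \<rho> K z' l m * w s0 m + w' m * PK \<phi> \<rho> K (z s0) l m)) (at s0)"
    by (intro DERIV_sum DERIV_mult P assms)
  then show ?thesis
    unfolding mvK_def by (rule DERIV_cong) (simp add: sum.distrib mult.commute)
qed

lemma DERIV_tripK:
  assumes "\<And>k. k \<in> {1..K} \<Longrightarrow> ((\<lambda>s. a s k) has_real_derivative a' k) (at s0)"
    and "\<And>k. k \<in> {1..K} \<Longrightarrow> ((\<lambda>s. b s k) has_real_derivative b' k) (at s0)"
    and "\<And>k. k \<in> {1..K} \<Longrightarrow> ((\<lambda>s. c s k) has_real_derivative c' k) (at s0)"
  shows "((\<lambda>s. tripK \<phi> \<rho> K (a s) (b s) (c s)) has_real_derivative
      tripK \<phi> \<rho> K a' (b s0) (c s0) + tripK \<phi> \<rho> K (a s0) b' (c s0) + tripK \<phi> \<rho> K (a s0) (b s0) c')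
    (at s0)"
  unfolding tripK_def
  by (rule DERIV_cong[OF DERIV_dotK[OF assms(1) DERIV_PK_mvK[OF assms(2,3)]]])
    (simp_all add: dotK_add_right add.assoc)

lemma PK_mvK_eq_DERIV:
  assumes "\<And>s l. l \<in> {1..K} \<Longrightarrow> mvK K (PK \<phi> \<rho> K (H s)) (U s) l = Q s l"
    and "\<And>k. k \<in> {1..K} \<Longrightarrow> ((\<lambda>s. H s k) has_real_derivative H' k) (at s0)"
    and "\<And>k. k \<in> {1..K} \<Longrightarrow> ((\<lambda>s. U s k) has_real_derivative U' k) (at s0)"
    and "\<And>k. k \<in> {1..K} \<Longrightarrow> ((\<lambda>s. Q s k) has_real_derivative Q' k) (at s0)"
    and "l \<in> {1..K}"
  shows "mvK K (PK \<phi> \<rho> K H') (U s0) l + mvK K (PK \<phi> \<rho> K (H s0)) U' l = Q' l"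
proof -
  have "((\<lambda>s. mvK K (PK \<phi> \<rho> K (H s)) (U s) l) has_real_derivative
      mvK K (PK \<phi> \<rho> K H') (U s0) l + mvK K (PK \<phi> \<rho> K (H s0)) U' l) (at s0)"
    using assms(2,3) by (rule DERIV_PK_mvK)
  moreover have "(\<lambda>s. mvK K (PK \<phi> \<rho> K (H s)) (U s) l) = (\<lambda>s. Q s l)"
    using assms(1,5) by simp
  ultimately show ?thesis
    using assms(4,5) DERIV_unique by metis
qed

section \<open>Energy balance\<close>

definition swe_energy :: "nat \<Rightarrow> real \<Rightarrow> (nat \<Rightarrow> real) \<Rightarrow> (nat \<Rightarrow> real) \<Rightarrow> (nat \<Rightarrow> real) \<Rightarrow>
    (nat \<Rightarrow> real) \<Rightarrow> (nat \<Rightarrow> real) \<Rightarrow> (nat \<Rightarrow> real) \<Rightarrow> real" where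
  "swe_energy K g h qx qy u v B =
     1/2 * (dotK K qx u + dotK K qy v) + 1/2 * g * dotK K h h + g * dotK K h B"

text \<open>With \<open>q = qx\<close> this is the flux \<open>H\<close>; with \<open>q = qy\<close> and \<open>u\<close>, \<open>v\<close> exchanged it is \<open>K\<close>.\<close>

definition swe_flux ::
    "(nat \<Rightarrow> real^'d::finite \<Rightarrow> real) \<Rightarrow> (real^'d \<Rightarrow> real) \<Rightarrow> nat \<Rightarrow> real \<Rightarrow> (nat \<Rightarrow> real) \<Rightarrow>
      (nat \<Rightarrow> real) \<Rightarrow> (nat \<Rightarrow> real) \<Rightarrow> (nat \<Rightarrow> real) \<Rightarrow> (nat \<Rightarrow> real) \<Rightarrow> real" where
  "swe_flux \<phi> \<rho> K g q h u v B =
     1/2 * (tripK \<phi> \<rho> K u q u + tripK \<phi> \<rho> K v q v) + g * dotK K q (\<lambda>j. h j + B j)"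

lemma DERIV_swe_energy:
  assumes "\<And>k. k \<in> {1..K} \<Longrightarrow> ((\<lambda>s. h s k) has_real_derivative h' k) (at s0)"
    and "\<And>k. k \<in> {1..K} \<Longrightarrow> ((\<lambda>s. qx s k) has_real_derivative qx' k) (at s0)"
    and "\<And>k. k \<in> {1..K} \<Longrightarrow> ((\<lambda>s. qy s k) has_real_derivative qy' k) (at s0)"
    and "\<And>k. k \<in> {1..K} \<Longrightarrow> ((\<lambda>s. u s k) has_real_derivative u' k) (at s0)"
    and "\<And>k. k \<in> {1..K} \<Longrightarrow> ((\<lambda>s. v s k) has_real_derivative v' k) (at s0)"
  shows "((\<lambda>s. swe_energy K g (h s) (qx s) (qy s) (u s) (v s) B) has_real_derivative
      1/2 * (dotK K qx' (u s0) + dotK K (qx s0) u' + dotK K qy' (v s0) + dotK K (qy s0) v')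
      + g * dotK K h' (\<lambda>j. h s0 j + B j)) (at s0)"
  unfolding swe_energy_def
  by (rule DERIV_cong, (rule DERIV_add DERIV_cmult DERIV_dotK DERIV_const assms | assumption)+)
    (simp add: dotK_add_right dotK_commute[of K h'] algebra_simps)

lemma DERIV_swe_flux:
  assumes "\<And>k. k \<in> {1..K} \<Longrightarrow> ((\<lambda>s. q s k) has_real_derivative q' k) (at s0)"
    and "\<And>k. k \<in> {1..K} \<Longrightarrow> ((\<lambda>s. h s k) has_real_derivative h' k) (at s0)"
    and "\<And>k. k \<in> {1..K} \<Longrightarrow> ((\<lambda>s. u s k) has_real_derivative u' k) (at s0)"
    and "\<And>k. k \<in> {1..K} \<Longrightarrow> ((\<lambda>s. v s k) has_real_derivative v' k) (at s0)"
    and "\<And>k. k \<in> {1..K} \<Longrightarrow> ((\<lambda>s. B s k) has_real_derivative B' k) (at s0)"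
  shows "((\<lambda>s. swe_flux \<phi> \<rho> K g (q s) (h s) (u s) (v s) (B s)) has_real_derivative
      1/2 * (tripK \<phi> \<rho> K (u s0) q' (u s0) + tripK \<phi> \<rho> K (v s0) q' (v s0))
      + tripK \<phi> \<rho> K (u s0) (q s0) u' + tripK \<phi> \<rho> K (v s0) (q s0) v'
      + g * dotK K q' (\<lambda>j. h s0 j + B s0 j) + g * dotK K (q s0) (\<lambda>j. h' j + B' j)) (at s0)"
  unfolding swe_flux_def
  by (rule DERIV_cong, (rule DERIV_add DERIV_cmult DERIV_dotK DERIV_tripK assms | assumption)+)
    (simp add: tripK_swap13[of _ _ _ u'] tripK_swap13[of _ _ _ v'] algebra_simps)

lemma dotK_deriv_velocity:
  assumes "\<And>l. l \<in> {1..K} \<Longrightarrow> mvK K (PK \<phi> \<rho> K h) u l = q l"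
    and "\<And>l. l \<in> {1..K} \<Longrightarrow> mvK K (PK \<phi> \<rho> K h') u l + mvK K (PK \<phi> \<rho> K h) u' l = q' l"
  shows "dotK K q u' = dotK K u q' - tripK \<phi> \<rho> K u h' u"
proof -
  have T: "tripK \<phi> \<rho> K u h u' = dotK K q u'"
    using assms(1) by (rule tripK_eq_dotK)
  have "dotK K u q' = dotK K u (\<lambda>l. mvK K (PK \<phi> \<rho> K h') u l + mvK K (PK \<phi> \<rho> K h) u' l)"
    using assms(2) by (intro dotK_cong) simp
  also have "\<dots> = tripK \<phi> \<rho> K u h' u + dotK K q u'"
    by (simp only: dotK_add_right tripK_def[symmetric] T)
  finally show ?thesis
    by simp
qed

lemma swe_energy_balance_pointwise:
  fixes h qx qy u v B ht hx hy qxt qxx qyt qyy ut ux uy vt vx vy Bx By :: "nat \<Rightarrow> real"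
  assumes vel_u: "\<And>l. l \<in> {1..K} \<Longrightarrow> mvK K (PK \<phi> \<rho> K h) u l = qx l"
    and vel_v: "\<And>l. l \<in> {1..K} \<Longrightarrow> mvK K (PK \<phi> \<rho> K h) v l = qy l"
    and vel_u_t: "\<And>l. l \<in> {1..K} \<Longrightarrow> mvK K (PK \<phi> \<rho> K ht) u l + mvK K (PK \<phi> \<rho> K h) ut l = qxt l"
    and vel_v_t: "\<And>l. l \<in> {1..K} \<Longrightarrow> mvK K (PK \<phi> \<rho> K ht) v l + mvK K (PK \<phi> \<rho> K h) vt l = qyt l"
    and mass: "\<And>k. k \<in> {1..K} \<Longrightarrow> ht k + qxx k + qyy k = 0"
    and mom_x: "\<And>k. k \<in> {1..K} \<Longrightarrow> qxt k
        + (mvK K (PK \<phi> \<rho> K qxx) u k + mvK K (PK \<phi> \<rho> K qx) ux k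
           + 1/2 * g * (mvK K (PK \<phi> \<rho> K hx) h k + mvK K (PK \<phi> \<rho> K h) hx k))
        + (mvK K (PK \<phi> \<rho> K qyy) u k + mvK K (PK \<phi> \<rho> K qy) uy k)
        = - g * mvK K (PK \<phi> \<rho> K h) Bx k"
    and mom_y: "\<And>k. k \<in> {1..K} \<Longrightarrow> qyt k
        + (mvK K (PK \<phi> \<rho> K qxx) v k + mvK K (PK \<phi> \<rho> K qx) vx k)
        + (mvK K (PK \<phi> \<rho> K qyy) v k + mvK K (PK \<phi> \<rho> K qy) vy k
           + 1/2 * g * (mvK K (PK \<phi> \<rho> K hy) h k + mvK K (PK \<phi> \<rho> K h) hy k))
        = - g * mvK K (PK \<phi> \<rho> K h) By k"
  shows "(1/2 * (dotK K qxt u + dotK K qx ut + dotK K qyt v + dotK K qy vt)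
          + g * dotK K ht (\<lambda>j. h j + B j))
    + (1/2 * (tripK \<phi> \<rho> K u qxx u + tripK \<phi> \<rho> K v qxx v)
          + tripK \<phi> \<rho> K u qx ux + tripK \<phi> \<rho> K v qx vx
          + g * dotK K qxx (\<lambda>j. h j + B j) + g * dotK K qx (\<lambda>j. hx j + Bx j))
    + (1/2 * (tripK \<phi> \<rho> K v qyy v + tripK \<phi> \<rho> K u qyy u)
          + tripK \<phi> \<rho> K v qy vy + tripK \<phi> \<rho> K u qy uy
          + g * dotK K qyy (\<lambda>j. h j + B j) + g * dotK K qy (\<lambda>j. hy j + By j)) = 0"
proof -
  let ?T = "tripK \<phi> \<rho> K"
  have T_u: "?T u h w = dotK K qx w" for w
    using vel_u by (rule tripK_eq_dotK)
  have T_v: "?T v h w = dotK K qy w" for w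
    using vel_v by (rule tripK_eq_dotK)
  have kin_u: "dotK K qx ut = dotK K u qxt - ?T u ht u"
    using vel_u vel_u_t by (rule dotK_deriv_velocity)
  have kin_v: "dotK K qy vt = dotK K v qyt - ?T v ht v"
    using vel_v vel_v_t by (rule dotK_deriv_velocity)
  have mom_u: "dotK K u qxt + (?T u qxx u + ?T u qx ux + g * dotK K qx hx) + (?T u qyy u + ?T u qy uy)
      = - g * dotK K qx Bx"
  proof -
    have "dotK K u (\<lambda>k. qxt k
        + (mvK K (PK \<phi> \<rho> K qxx) u k + mvK K (PK \<phi> \<rho> K qx) ux k
           + 1/2 * g * (mvK K (PK \<phi> \<rho> K hx) h k + mvK K (PK \<phi> \<rho> K h) hx k))
        + (mvK K (PK \<phi> \<rho> K qyy) u k + mvK K (PK \<phi> \<rho> K qy) uy k))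
      = dotK K u (\<lambda>k. - g * mvK K (PK \<phi> \<rho> K h) Bx k)"
      using mom_x by (rule dotK_cong)
    then show ?thesis
      by (simp only: dotK_add_right dotK_mult_right tripK_def[symmetric] tripK_swap23[of _ _ _ u hx] T_u)
        (simp add: algebra_simps)
  qed
  have mom_v: "dotK K v qyt + (?T v qxx v + ?T v qx vx) + (?T v qyy v + ?T v qy vy + g * dotK K qy hy)
      = - g * dotK K qy By"
  proof -
    have "dotK K v (\<lambda>k. qyt k
        + (mvK K (PK \<phi> \<rho> K qxx) v k + mvK K (PK \<phi> \<rho> K qx) vx k)
        + (mvK K (PK \<phi> \<rho> K qyy) v k + mvK K (PK \<phi> \<rho> K qy) vy k
           + 1/2 * g * (mvK K (PK \<phi> \<rho> K hy) h k + mvK K (PK \<phi> \<rho> K h) hy k)))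
      = dotK K v (\<lambda>k. - g * mvK K (PK \<phi> \<rho> K h) By k)"
      using mom_y by (rule dotK_cong)
    then show ?thesis
      by (simp only: dotK_add_right dotK_mult_right tripK_def[symmetric] tripK_swap23[of _ _ _ v hy] T_v)
        (simp add: algebra_simps)
  qed
  have mass_u: "?T u ht u + ?T u qxx u + ?T u qyy u = 0"
    unfolding tripK_conv_dotK_middle using mass by (rule dotK_sum3_eq_0)
  have mass_v: "?T v ht v + ?T v qxx v + ?T v qyy v = 0"
    unfolding tripK_conv_dotK_middle using mass by (rule dotK_sum3_eq_0)
  have "dotK K ht (\<lambda>j. h j + B j) + dotK K qxx (\<lambda>j. h j + B j) + dotK K qyy (\<lambda>j. h j + B j) = 0"
    using mass by (rule dotK_sum3_eq_0)
  then have mass_h: "g * (dotK K ht (\<lambda>j. h j + B j) + dotK K qxx (\<lambda>j. h j + B j)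
      + dotK K qyy (\<lambda>j. h j + B j)) = 0"
    by simp
  show ?thesis
    using kin_u kin_v mom_u mom_v mass_u mass_v mass_h
    unfolding dotK_commute[of K qxt u] dotK_commute[of K qyt v] dotK_add_right distrib_left
    by linarith
qed

lemma swe_energy_balance_at:
  fixes h qx qy u v :: "real \<Rightarrow> real \<Rightarrow> real \<Rightarrow> nat \<Rightarrow> real" and B :: "real \<Rightarrow> real \<Rightarrow> nat \<Rightarrow> real"
    and ht hx hy qxt qxx qyt qyy ut ux uy vt vx vy Bx By :: "nat \<Rightarrow> real"
  assumes h_t: "\<And>k. k \<in> {1..K} \<Longrightarrow> ((\<lambda>s. h x y s k) has_real_derivative ht k) (at t)"
    and h_x: "\<And>k. k \<in> {1..K} \<Longrightarrow> ((\<lambda>s. h s y t k) has_real_derivative hx k) (at x)"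
    and h_y: "\<And>k. k \<in> {1..K} \<Longrightarrow> ((\<lambda>s. h x s t k) has_real_derivative hy k) (at y)"
    and qx_t: "\<And>k. k \<in> {1..K} \<Longrightarrow> ((\<lambda>s. qx x y s k) has_real_derivative qxt k) (at t)"
    and qx_x: "\<And>k. k \<in> {1..K} \<Longrightarrow> ((\<lambda>s. qx s y t k) has_real_derivative qxx k) (at x)"
    and qy_t: "\<And>k. k \<in> {1..K} \<Longrightarrow> ((\<lambda>s. qy x y s k) has_real_derivative qyt k) (at t)"
    and qy_y: "\<And>k. k \<in> {1..K} \<Longrightarrow> ((\<lambda>s. qy x s t k) has_real_derivative qyy k) (at y)"
    and u_t: "\<And>k. k \<in> {1..K} \<Longrightarrow> ((\<lambda>s. u x y s k) has_real_derivative ut k) (at t)"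
    and u_x: "\<And>k. k \<in> {1..K} \<Longrightarrow> ((\<lambda>s. u s y t k) has_real_derivative ux k) (at x)"
    and u_y: "\<And>k. k \<in> {1..K} \<Longrightarrow> ((\<lambda>s. u x s t k) has_real_derivative uy k) (at y)"
    and v_t: "\<And>k. k \<in> {1..K} \<Longrightarrow> ((\<lambda>s. v x y s k) has_real_derivative vt k) (at t)"
    and v_x: "\<And>k. k \<in> {1..K} \<Longrightarrow> ((\<lambda>s. v s y t k) has_real_derivative vx k) (at x)"
    and v_y: "\<And>k. k \<in> {1..K} \<Longrightarrow> ((\<lambda>s. v x s t k) has_real_derivative vy k) (at y)"
    and B_x: "\<And>k. k \<in> {1..K} \<Longrightarrow> ((\<lambda>s. B s y k) has_real_derivative Bx k) (at x)"
    and B_y: "\<And>k. k \<in> {1..K} \<Longrightarrow> ((\<lambda>s. B x s k) has_real_derivative By k) (at y)"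
    and vel_u: "\<And>s l. l \<in> {1..K} \<Longrightarrow> mvK K (PK \<phi> \<rho> K (h x y s)) (u x y s) l = qx x y s l"
    and vel_v: "\<And>s l. l \<in> {1..K} \<Longrightarrow> mvK K (PK \<phi> \<rho> K (h x y s)) (v x y s) l = qy x y s l"
    and mass: "\<And>k. k \<in> {1..K} \<Longrightarrow> ht k + qxx k + qyy k = 0"
    and mom_x: "\<And>k. k \<in> {1..K} \<Longrightarrow> qxt k
        + deriv (\<lambda>s. mvK K (PK \<phi> \<rho> K (qx s y t)) (u s y t) k
                     + 1/2 * g * mvK K (PK \<phi> \<rho> K (h s y t)) (h s y t) k) x
        + deriv (\<lambda>s. mvK K (PK \<phi> \<rho> K (qy x s t)) (u x s t) k) y
        = - g * mvK K (PK \<phi> \<rho> K (h x y t)) Bx k"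
    and mom_y: "\<And>k. k \<in> {1..K} \<Longrightarrow> qyt k
        + deriv (\<lambda>s. mvK K (PK \<phi> \<rho> K (qx s y t)) (v s y t) k) x
        + deriv (\<lambda>s. mvK K (PK \<phi> \<rho> K (qy x s t)) (v x s t) k
                     + 1/2 * g * mvK K (PK \<phi> \<rho> K (h x s t)) (h x s t) k) y
        = - g * mvK K (PK \<phi> \<rho> K (h x y t)) By k"
  shows "\<exists>Et Hx Ky.
    ((\<lambda>s. swe_energy K g (h x y s) (qx x y s) (qy x y s) (u x y s) (v x y s) (B x y))
       has_real_derivative Et) (at t)
    \<and> ((\<lambda>s. swe_flux \<phi> \<rho> K g (qx s y t) (h s y t) (u s y t) (v s y t) (B s y))
       has_real_derivative Hx) (at x)
    \<and> ((\<lambda>s. swe_flux \<phi> \<rho> K g (qy x s t) (h x s t) (v x s t) (u x s t) (B x s))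
       has_real_derivative Ky) (at y)
    \<and> Et + Hx + Ky = 0"
proof -
  let ?P = "PK \<phi> \<rho> K"
  have mom_x': "\<And>k. k \<in> {1..K} \<Longrightarrow> qxt k
      + (mvK K (?P qxx) (u x y t) k + mvK K (?P (qx x y t)) ux k
         + 1/2 * g * (mvK K (?P hx) (h x y t) k + mvK K (?P (h x y t)) hx k))
      + (mvK K (?P qyy) (u x y t) k + mvK K (?P (qy x y t)) uy k)
      = - g * mvK K (?P (h x y t)) Bx k"
    using mom_x
    by (simp only: DERIV_imp_deriv[OF DERIV_PK_mvK[OF qy_y u_y]]
        DERIV_imp_deriv[OF DERIV_add[OF DERIV_PK_mvK[OF qx_x u_x]
          DERIV_cmult[OF DERIV_PK_mvK[OF h_x h_x]]]])
  have mom_y': "\<And>k. k \<in> {1..K} \<Longrightarrow> qyt k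
      + (mvK K (?P qxx) (v x y t) k + mvK K (?P (qx x y t)) vx k)
      + (mvK K (?P qyy) (v x y t) k + mvK K (?P (qy x y t)) vy k
         + 1/2 * g * (mvK K (?P hy) (h x y t) k + mvK K (?P (h x y t)) hy k))
      = - g * mvK K (?P (h x y t)) By k"
    using mom_y
    by (simp only: DERIV_imp_deriv[OF DERIV_PK_mvK[OF qx_x v_x]]
        DERIV_imp_deriv[OF DERIV_add[OF DERIV_PK_mvK[OF qy_y v_y]
          DERIV_cmult[OF DERIV_PK_mvK[OF h_y h_y]]]])
  have vel_u_t: "\<And>l. l \<in> {1..K} \<Longrightarrow> mvK K (?P ht) (u x y t) l + mvK K (?P (h x y t)) ut l = qxt l"
    by (rule PK_mvK_eq_DERIV[OF vel_u h_t u_t qx_t])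
  have vel_v_t: "\<And>l. l \<in> {1..K} \<Longrightarrow> mvK K (?P ht) (v x y t) l + mvK K (?P (h x y t)) vt l = qyt l"
    by (rule PK_mvK_eq_DERIV[OF vel_v h_t v_t qy_t])
  show ?thesis
    by (rule exI conjI DERIV_swe_energy DERIV_swe_flux h_t h_x h_y qx_t qx_x qy_t qy_y
        u_t u_x u_y v_t v_x v_y B_x B_y
        swe_energy_balance_pointwise[OF vel_u vel_v vel_u_t vel_v_t mass mom_x' mom_y']
        | assumption)+
qed

section \<open>Smooth solutions\<close>

lemma smooth_fun_differentiable: "smooth_fun f \<Longrightarrow> f differentiable (at p)"
  by (erule smooth_fun.cases) (auto simp: differentiable_on_def)

lemma smooth_fun_DERIV_along:
  fixes \<gamma> :: "real \<Rightarrow> 'a::real_normed_vector"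
  assumes "smooth_fun f" "\<gamma> differentiable (at s)"
  shows "((\<lambda>s. f (\<gamma> s)) has_real_derivative deriv (\<lambda>s. f (\<gamma> s)) s) (at s)"
proof -
  have "(f \<circ> \<gamma>) differentiable (at s)"
    using assms(2) smooth_fun_differentiable[OF assms(1)] by (rule differentiable_chain_at)
  then show ?thesis
    by (simp add: o_def DERIV_deriv_iff_real_differentiable)
qed

lemma smooth_fun_partials2:
  assumes "smooth_fun (\<lambda>(x, y). F x y)"
  shows "((\<lambda>s. F s y) has_real_derivative deriv (\<lambda>s. F s y) x) (at x)"
    and "((\<lambda>s. F x s) has_real_derivative deriv (\<lambda>s. F x s) y) (at y)"
  using smooth_fun_DERIV_along[OF assms, of "\<lambda>s. (s, y)" x]
    smooth_fun_DERIV_along[OF assms, of "\<lambda>s. (x, s)" y]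
  by simp_all

lemma smooth_fun_partials3:
  assumes "smooth_fun (\<lambda>(x, y, t). F x y t)"
  shows "((\<lambda>s. F s y t) has_real_derivative deriv (\<lambda>s. F s y t) x) (at x)"
    and "((\<lambda>s. F x s t) has_real_derivative deriv (\<lambda>s. F x s t) y) (at y)"
    and "((\<lambda>s. F x y s) has_real_derivative deriv (\<lambda>s. F x y s) t) (at t)"
  using smooth_fun_DERIV_along[OF assms, of "\<lambda>s. (s, y, t)" x]
    smooth_fun_DERIV_along[OF assms, of "\<lambda>s. (x, s, t)" y]
    smooth_fun_DERIV_along[OF assms, of "\<lambda>s. (x, y, s)" t]
  by simp_all

lemma differentiable_velocity:
  fixes H Q :: "real \<Rightarrow> nat \<Rightarrow> real"
  assumes "\<And>s. invertibleK K (PK \<phi> \<rho> K (H s))"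
    and "\<And>k. k \<in> {1..K} \<Longrightarrow> (\<lambda>s. H s k) differentiable (at s0)"
    and "\<And>k. k \<in> {1..K} \<Longrightarrow> (\<lambda>s. Q s k) differentiable (at s0)"
    and "l \<in> {1..K}"
  shows "(\<lambda>s. mvK K (invK K (PK \<phi> \<rho> K (H s))) (Q s) l) differentiable (at s0)"
proof -
  have "(\<lambda>s. PK \<phi> \<rho> K (H s) i j) differentiable (at s0)" for i j
    unfolding PK_def using assms(2)
    by (intro differentiable_sum differentiable_mult differentiable_const ballI) auto
  then show ?thesis
    unfolding mvK_def using assms
    by (intro differentiable_sum differentiable_mult differentiable_invK ballI) auto
qed

lemma velocity_partials3:
  assumes "\<And>k. k \<in> {1..K} \<Longrightarrow> smooth_fun (\<lambda>(x, y, t). h x y t k)"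
    and "\<And>k. k \<in> {1..K} \<Longrightarrow> smooth_fun (\<lambda>(x, y, t). q x y t k)"
    and "\<And>x y t. invertibleK K (PK \<phi> \<rho> K (h x y t))"
    and "\<And>x y t. U x y t = mvK K (invK K (PK \<phi> \<rho> K (h x y t))) (q x y t)"
    and "k \<in> {1..K}"
  shows "((\<lambda>s. U s y t k) has_real_derivative deriv (\<lambda>s. U s y t k) x) (at x)"
    and "((\<lambda>s. U x s t k) has_real_derivative deriv (\<lambda>s. U x s t k) y) (at y)"
    and "((\<lambda>s. U x y s k) has_real_derivative deriv (\<lambda>s. U x y s k) t) (at t)"
  unfolding DERIV_deriv_iff_real_differentiable assms(4)
  using assms(1-3,5) smooth_fun_partials3[OF assms(1)] smooth_fun_partials3[OF assms(2)]
  by (auto intro!: differentiable_velocity simp: DERIV_deriv_iff_real_differentiable)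

theorem lemma3p3:
  fixes \<rho> :: "real^'d::finite \<Rightarrow> real"
    and \<phi> :: "nat \<Rightarrow> real^'d \<Rightarrow> real"
    and K :: nat and g :: real
    and h qx qy u v :: "real \<Rightarrow> real \<Rightarrow> real \<Rightarrow> nat \<Rightarrow> real"
    and B :: "real \<Rightarrow> real \<Rightarrow> nat \<Rightarrow> real"
  assumes K_pos: "K \<ge> 1"
    and g_pos: "g > 0"
    and rho_meas: "\<rho> \<in> borel_measurable lborel"
    and rho_nonneg: "\<And>\<xi>. \<rho> \<xi> \<ge> 0"
    and rho_prob: "(\<integral>\<^sup>+ \<xi>. ennreal (\<rho> \<xi>) \<partial>lborel) = 1"
    and rho_moments: "\<And>\<alpha> :: 'd \<Rightarrow> nat.
        integrable lborel (\<lambda>\<xi>. (\<Prod>i\<in>UNIV. \<bar>\<xi> $ i\<bar> ^ \<alpha> i) * \<rho> \<xi>)"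
    and phi_poly: "\<And>k. k \<in> {1..K} \<Longrightarrow> poly_fun (\<phi> k)"
    and phi_one: "\<phi> 1 = (\<lambda>_. 1)"
    and phi_orthonormal: "\<And>k l. k \<in> {1..K} \<Longrightarrow> l \<in> {1..K} \<Longrightarrow>
        (\<integral>\<xi>. \<phi> k \<xi> * \<phi> l \<xi> * \<rho> \<xi> \<partial>lborel) = (if k = l then 1 else 0)"
    and h_smooth: "\<And>k. k \<in> {1..K} \<Longrightarrow> smooth_fun (\<lambda>(x, y, t). h x y t k)"
    and qx_smooth: "\<And>k. k \<in> {1..K} \<Longrightarrow> smooth_fun (\<lambda>(x, y, t). qx x y t k)"
    and qy_smooth: "\<And>k. k \<in> {1..K} \<Longrightarrow> smooth_fun (\<lambda>(x, y, t). qy x y t k)"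
    and B_smooth: "\<And>k. k \<in> {1..K} \<Longrightarrow> smooth_fun (\<lambda>(x, y). B x y k)"
    and P_h_invertible: "\<And>x y t. invertibleK K (PK \<phi> \<rho> K (h x y t))"
    and u_def: "\<And>x y t. u x y t = mvK K (invK K (PK \<phi> \<rho> K (h x y t))) (qx x y t)"
    and v_def: "\<And>x y t. v x y t = mvK K (invK K (PK \<phi> \<rho> K (h x y t))) (qy x y t)"
    and eq_h: "\<And>x y t k. k \<in> {1..K} \<Longrightarrow>
        deriv (\<lambda>s. h x y s k) t + deriv (\<lambda>s. qx s y t k) x + deriv (\<lambda>s. qy x s t k) y = 0"
    and eq_qx: "\<And>x y t k. k \<in> {1..K} \<Longrightarrow>
        deriv (\<lambda>s. qx x y s k) t
        + deriv (\<lambda>s. mvK K (PK \<phi> \<rho> K (qx s y t)) (u s y t) k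
                     + 1/2 * g * mvK K (PK \<phi> \<rho> K (h s y t)) (h s y t) k) x
        + deriv (\<lambda>s. mvK K (PK \<phi> \<rho> K (qy x s t)) (u x s t) k) y
        = - g * mvK K (PK \<phi> \<rho> K (h x y t)) (\<lambda>j. deriv (\<lambda>s. B s y j) x) k"
    and eq_qy: "\<And>x y t k. k \<in> {1..K} \<Longrightarrow>
        deriv (\<lambda>s. qy x y s k) t
        + deriv (\<lambda>s. mvK K (PK \<phi> \<rho> K (qx s y t)) (v s y t) k) x
        + deriv (\<lambda>s. mvK K (PK \<phi> \<rho> K (qy x s t)) (v x s t) k
                     + 1/2 * g * mvK K (PK \<phi> \<rho> K (h x s t)) (h x s t) k) y
        = - g * mvK K (PK \<phi> \<rho> K (h x y t)) (\<lambda>j. deriv (\<lambda>s. B x s j) y) k"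
  shows "\<forall>x y t. \<exists>Et Hx Ky.
    ((\<lambda>s. 1/2 * (dotK K (qx x y s) (u x y s) + dotK K (qy x y s) (v x y s))
          + 1/2 * g * dotK K (h x y s) (h x y s) + g * dotK K (h x y s) (B x y))
       has_real_derivative Et) (at t)
    \<and> ((\<lambda>s. 1/2 * (dotK K (u s y t) (mvK K (PK \<phi> \<rho> K (qx s y t)) (u s y t))
                   + dotK K (v s y t) (mvK K (PK \<phi> \<rho> K (qx s y t)) (v s y t)))
          + g * dotK K (qx s y t) (\<lambda>j. h s y t j + B s y j))
       has_real_derivative Hx) (at x)
    \<and> ((\<lambda>s. 1/2 * (dotK K (v x s t) (mvK K (PK \<phi> \<rho> K (qy x s t)) (v x s t))
                   + dotK K (u x s t) (mvK K (PK \<phi> \<rho> K (qy x s t)) (u x s t)))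
          + g * dotK K (qy x s t) (\<lambda>j. h x s t j + B x s j))
       has_real_derivative Ky) (at y)
    \<and> Et + Hx + Ky = 0"
proof (intro allI, goal_cases)
  case (1 x y t)
  note h' = smooth_fun_partials3[OF h_smooth, where x = x and y = y and t = t]
    and qx' = smooth_fun_partials3[OF qx_smooth, where x = x and y = y and t = t]
    and qy' = smooth_fun_partials3[OF qy_smooth, where x = x and y = y and t = t]
    and B' = smooth_fun_partials2[OF B_smooth, where x = x and y = y]
    and u' = velocity_partials3[OF h_smooth qx_smooth P_h_invertible u_def,
        where x = x and y = y and t = t]
    and v' = velocity_partials3[OF h_smooth qy_smooth P_h_invertible v_def,
        where x = x and y = y and t = t]
  have vel_u: "\<And>s l. l \<in> {1..K} \<Longrightarrow> mvK K (PK \<phi> \<rho> K (h x y s)) (u x y s) l = qx x y s l"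
    by (simp add: u_def mvK_mvK_invK P_h_invertible)
  have vel_v: "\<And>s l. l \<in> {1..K} \<Longrightarrow> mvK K (PK \<phi> \<rho> K (h x y s)) (v x y s) l = qy x y s l"
    by (simp add: v_def mvK_mvK_invK P_h_invertible)
  show ?case
    using swe_energy_balance_at[where h = h and qx = qx and qy = qy and u = u and v = v and B = B
        and x = x and y = y and t = t, OF h'(3,1,2) qx'(3,1) qy'(3,2) u'(3,1,2) v'(3,1,2) B'(1,2)
        vel_u vel_v eq_h eq_qx eq_qy]
    unfolding swe_energy_def swe_flux_def tripK_def by blast
qed

end
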